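(* Let $d\geq1$ and $H=(H_0,\ldots,H_d)\in(0,1)\times(0,\frac34)^d$, and set $H_+:=H_1+\cdots+H_d$. For $\kappa,\varepsilon>0$ and $\eta\in\mathbb R^d$ let $$K_{H,\kappa,\varepsilon}(\eta):=\frac{1}{1+|\eta|^{1+2H_0-2\kappa-2\varepsilon}}\prod_{i=1}^d\frac{1}{|\eta_i|^{2H_i-1}}.$$ Assume $\frac{3d}{4}-\frac12<H_0+H_+\leq d-\frac12$. Then for every $\alpha$ with $\max\big(d-\frac12-(H_0+H_+),\frac{d-1}{4}\big)<\alpha<\frac d4$, there exist $\kappa,\varepsilon>0$ such that $$\int_{\mathbb R^d\times\mathbb R^d}\frac{d\eta\,d\tilde\eta}{\{1+|\eta-\tilde\eta|^2\}^{2\alpha}}\,K_{H,\kappa,\varepsilon}(\eta)\,K_{H,\kappa,\varepsilon}(\tilde\eta)<\infty.$$ *)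

theory Defs
  imports "HOL-Analysis.Analysis"
begin

text \<open>The kernel K_{H,kappa,eps}(eta) on R^d, with R^d rendered as real^'n (d = CARD('n)).
  H0 is H_0 and H $ i are H_1..H_d. |eta| is the Euclidean norm.\<close>
definition K_kernel :: "real \<Rightarrow> real^'n \<Rightarrow> real \<Rightarrow> real \<Rightarrow> real^'n \<Rightarrow> real" where
  "K_kernel H0 H \<kappa> \<epsilon> \<eta> =
     (1 / (1 + norm \<eta> powr (1 + 2*H0 - 2*\<kappa> - 2*\<epsilon>))) *
     (\<Prod>i\<in>UNIV. 1 / (\<bar>\<eta> $ i\<bar> powr (2 * H $ i - 1)))"

end

theory Submission
  imports Defs
begin

(*
  Put a = 2 alpha / d. Since |z_i| <= |z|, the weight (1 + |z|^2)^(-2 alpha) is at most the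
  product of the one-dimensional weights (1 + z_i^2)^(-a); and for any b_i >= 0 with
  sum b_i = e = 1 + 2 H_0 - 2 kappa - 2 epsilon one has
  1 / (1 + |eta|^e) <= 2^e prod (1 + |eta_i|)^(-b_i).
  The integrand is thus dominated by a product over the coordinates of the functions
  (1 + (x - y)^2)^(-a) f(x) f(y) with f(t) = |t|^s (1 + |t|)^(-b), s = 1 - 2 H_i, and by Tonelli the
  integral factorises. In one dimension the double integral is finite as soon as 0 <= a < 1/2,
  s > -1/2 and a + b - s > 1: where |x - y| < |x|/2 the values f(x) and f(y) are comparable and the
  weight is integrable across the diagonal because 2 a < 1; where |x - y| is large compared with both
  |x| and |y| the weight is at most 8^a ((1 + |x|)(1 + |y|))^(-a), and the integral splits into a
  product of two integrable single integrals. The b_i can be chosen with a + b_i - s_i > 1 precisely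
  when sum_i (2 - 2 H_i - a) < e, which holds once kappa + epsilon is small because
  alpha > d - 1/2 - (H_0 + H_+).
*)

lemma powr_le_doubling:
  fixes u v p :: real
  assumes "0 < u" "u \<le> 2 * v" "v \<le> 2 * u"
  shows "v powr p \<le> 2 powr \<bar>p\<bar> * u powr p"
proof (cases "0 \<le> p")
  case True
  have "v powr p \<le> (2 * u) powr p" using assms True by (intro powr_mono2) auto
  then show ?thesis using assms True by (simp add: powr_mult)
next
  case False
  have "v powr p \<le> (u / 2) powr p" using assms False by (intro powr_mono2') auto
  then show ?thesis using assms False by (simp add: powr_divide powr_minus_divide)
qed

lemma nn_integral_even_le:
  fixes g :: "real \<Rightarrow> ennreal"
  assumes [measurable]: "g \<in> borel_measurable borel" and even: "\<And>x. g (- x) = g x"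
  shows "(\<integral>\<^sup>+x. g x \<partial>lborel) \<le> 2 * (\<integral>\<^sup>+x. indicator {0..} x * g x \<partial>lborel)"
proof -
  have "(\<integral>\<^sup>+x. g x \<partial>lborel)
      \<le> (\<integral>\<^sup>+x. indicator {0..} x * g x + indicator {0..} (- x) * g (- x) \<partial>lborel)"
    by (intro nn_integral_mono) (auto simp: indicator_def even)
  also have "\<dots> = (\<integral>\<^sup>+x. indicator {0..} x * g x \<partial>lborel)
      + (\<integral>\<^sup>+x. indicator {0..} (- x) * g (- x) \<partial>lborel)"
    by (intro nn_integral_add) auto
  also have "(\<integral>\<^sup>+x. indicator {0..} (- x) * g (- x) \<partial>lborel)
      = (\<integral>\<^sup>+x. indicator {0..} x * g x \<partial>distr lborel borel uminus)"
    by (subst nn_integral_distr) auto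
  also have "\<dots> = (\<integral>\<^sup>+x. indicator {0..} x * g x \<partial>lborel)"
    by (simp add: lborel_distr_uminus)
  finally show ?thesis by (simp add: mult_2)
qed

definition power_profile :: "real \<Rightarrow> real \<Rightarrow> real \<Rightarrow> real" where
  "power_profile s b t = \<bar>t\<bar> powr s * (1 + \<bar>t\<bar>) powr (- b)"

definition bracket_weight :: "real \<Rightarrow> real \<Rightarrow> real" where
  "bracket_weight a z = (1 / (1 + z\<^sup>2)) powr a"

lemma power_profile_nonneg: "0 \<le> power_profile s b t"
  by (simp add: power_profile_def)

lemma bracket_weight_nonneg: "0 \<le> bracket_weight a z"
  by (simp add: bracket_weight_def)

lemma bracket_weight_minus_commute: "bracket_weight a (x - y) = bracket_weight a (y - x)"
  by (simp add: bracket_weight_def power2_commute)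

lemma power_profile_measurable [measurable]: "power_profile s b \<in> borel_measurable borel"
  unfolding power_profile_def by measurable

lemma bracket_weight_measurable [measurable]: "bracket_weight a \<in> borel_measurable borel"
  unfolding bracket_weight_def by measurable

lemma power_profile_le_near:
  assumes "\<bar>x - y\<bar> < \<bar>x\<bar> / 2"
  shows "power_profile s b y \<le> 2 powr (\<bar>s\<bar> + \<bar>b\<bar>) * power_profile s b x"
proof -
  have "\<bar>x\<bar> \<le> 2 * \<bar>y\<bar>" "\<bar>y\<bar> \<le> 2 * \<bar>x\<bar>" "0 < \<bar>x\<bar>"
    using assms abs_triangle_ineq[of "x - y" y] abs_triangle_ineq[of "y - x" x]
    by (auto simp: abs_minus_commute)
  then have "\<bar>y\<bar> powr s \<le> 2 powr \<bar>s\<bar> * \<bar>x\<bar> powr s"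
    and "(1 + \<bar>y\<bar>) powr (- b) \<le> 2 powr \<bar>b\<bar> * (1 + \<bar>x\<bar>) powr (- b)"
    using powr_le_doubling[of "\<bar>x\<bar>" "\<bar>y\<bar>" s]
      powr_le_doubling[of "1 + \<bar>x\<bar>" "1 + \<bar>y\<bar>" "- b"] by simp_all
  then have "power_profile s b y
      \<le> (2 powr \<bar>s\<bar> * \<bar>x\<bar> powr s) * (2 powr \<bar>b\<bar> * (1 + \<bar>x\<bar>) powr (- b))"
    unfolding power_profile_def by (intro mult_mono) auto
  then show ?thesis
    by (simp add: power_profile_def powr_add mult_ac)
qed

lemma power_profile_le_pieces:
  assumes x: "0 \<le> x"
  shows "power_profile \<sigma> \<tau> x
    \<le> 2 powr \<bar>\<tau>\<bar> * (indicator {0..1} x * x powr \<sigma> + indicator {1..} x * x powr (\<sigma> - \<tau>))"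
    (is "_ \<le> ?c * _")
proof (cases "x \<le> 1")
  case True
  have "(1 + x) powr (- \<tau>) \<le> ?c * 1 powr (- \<tau>)"
    using x True powr_le_doubling[of 1 "1 + x" "- \<tau>"] by simp
  then have "power_profile \<sigma> \<tau> x \<le> ?c * x powr \<sigma>"
    using x mult_left_mono[of "(1 + x) powr (- \<tau>)" ?c "x powr \<sigma>"]
    by (simp add: power_profile_def mult_ac)
  then show ?thesis
    using x True by (auto simp: indicator_def intro: order_trans)
next
  case False
  have "(1 + x) powr (- \<tau>) \<le> ?c * x powr (- \<tau>)"
    using False powr_le_doubling[of x "1 + x" "- \<tau>"] by simp
  then have "power_profile \<sigma> \<tau> x \<le> x powr \<sigma> * (?c * x powr (- \<tau>))"
    using x unfolding power_profile_def by (simp add: mult_left_mono)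
  also have "\<dots> = ?c * x powr (\<sigma> - \<tau>)"
    by (simp add: powr_add[symmetric])
  finally show ?thesis
    using False by simp
qed

lemma nn_integral_power_profile_finite:
  fixes \<sigma> \<tau> :: real
  assumes "-1 < \<sigma>" "\<sigma> - \<tau> < -1"
  shows "(\<integral>\<^sup>+x. ennreal (power_profile \<sigma> \<tau> x) \<partial>lborel) < \<infinity>"
proof -
  define c where "c = 2 powr \<bar>\<tau>\<bar>"
  define h where "h x = c * (indicator {0..1} x * x powr \<sigma> + indicator {1..} x * x powr (\<sigma> - \<tau>))"
    for x :: real
  have I1: "((\<lambda>x. x powr \<sigma>) has_integral (1 / (\<sigma> + 1))) {0..1}"
    using has_integral_powr_from_0[of \<sigma> 1] assms by simp
  have I2: "((\<lambda>x. x powr (\<sigma> - \<tau>)) has_integral (- 1 / (\<sigma> - \<tau> + 1))) {1..}"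
    using has_integral_powr_to_inf[of "\<sigma> - \<tau>" 1] assms by simp
  have "(\<integral>\<^sup>+x. ennreal (power_profile \<sigma> \<tau> x) \<partial>lborel)
      \<le> 2 * (\<integral>\<^sup>+x. indicator {0..} x * ennreal (power_profile \<sigma> \<tau> x) \<partial>lborel)"
    by (rule nn_integral_even_le) (auto simp: power_profile_def)
  also have "\<dots> \<le> 2 * (\<integral>\<^sup>+x. ennreal (h x) \<partial>lborel)"
    unfolding h_def c_def using power_profile_le_pieces
    by (intro mult_left_mono nn_integral_mono) (auto simp: indicator_def intro: ennreal_leI)
  also have "(\<integral>\<^sup>+x. ennreal (h x) \<partial>lborel)
      = ennreal c * ((\<integral>\<^sup>+x. ennreal (indicator {0..1} x * x powr \<sigma>) \<partial>lborel)
          + (\<integral>\<^sup>+x. ennreal (indicator {1..} x * x powr (\<sigma> - \<tau>)) \<partial>lborel))"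
    by (simp add: h_def c_def ennreal_mult ennreal_plus nn_integral_cmult nn_integral_add)
  also have "\<dots> = ennreal c * (ennreal (1 / (\<sigma> + 1)) + ennreal (- 1 / (\<sigma> - \<tau> + 1)))"
    by (simp add: nn_integral_has_integral_lebesgue[OF _ I1] nn_integral_has_integral_lebesgue[OF _ I2])
  finally show ?thesis
    by (simp add: ennreal_mult_less_top le_less_trans)
qed

lemma bracket_weight_le_powr:
  assumes "0 \<le> a" "z \<noteq> 0"
  shows "bracket_weight a z \<le> \<bar>z\<bar> powr (- 2 * a)"
proof -
  have "bracket_weight a z \<le> (1 / z\<^sup>2) powr a"
    unfolding bracket_weight_def using assms
    by (intro powr_mono2) (auto simp: divide_simps add_pos_nonneg)
  also have "1 / z\<^sup>2 = \<bar>z\<bar> powr (- 2)"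
    using assms by (simp add: powr_minus_divide)
  finally show ?thesis
    by (simp add: powr_powr)
qed

lemma nn_integral_bracket_weight_ball:
  assumes a: "0 \<le> a" "a < 1/2" and r: "0 \<le> r"
  shows "(\<integral>\<^sup>+z. ennreal (if \<bar>z\<bar> < r then bracket_weight a z else 0) \<partial>lborel)
    \<le> ennreal (2 / (1 - 2 * a) * r powr (1 - 2 * a))"
proof -
  have "(\<integral>\<^sup>+z. indicator {0..} z * ennreal (if \<bar>z\<bar> < r then bracket_weight a z else 0) \<partial>lborel)
      \<le> (\<integral>\<^sup>+z. ennreal (indicator {0..r} z * z powr (- 2 * a)) \<partial>lborel)"
    using AE_lborel_singleton[of 0]
    by (intro nn_integral_mono_AE, eventually_elim)
      (auto simp: indicator_def intro!: ennreal_leI dest: bracket_weight_le_powr[OF a(1)])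
  also have "\<dots> = ennreal (r powr (1 - 2 * a) / (1 - 2 * a))"
    using has_integral_powr_from_0[of "- 2 * a" r] a r
    by (intro nn_integral_has_integral_lebesgue) auto
  finally have half: "(\<integral>\<^sup>+z. indicator {0..} z
      * ennreal (if \<bar>z\<bar> < r then bracket_weight a z else 0) \<partial>lborel)
    \<le> ennreal (r powr (1 - 2 * a) / (1 - 2 * a))" .
  have "(\<integral>\<^sup>+z. ennreal (if \<bar>z\<bar> < r then bracket_weight a z else 0) \<partial>lborel)
      \<le> 2 * (\<integral>\<^sup>+z. indicator {0..} z * ennreal (if \<bar>z\<bar> < r then bracket_weight a z else 0) \<partial>lborel)"
    by (rule nn_integral_even_le) (auto simp: bracket_weight_def)
  also have "\<dots> \<le> 2 * ennreal (r powr (1 - 2 * a) / (1 - 2 * a))"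
    using half by (rule mult_left_mono) simp
  also have "\<dots> = ennreal (2 / (1 - 2 * a) * r powr (1 - 2 * a))"
    using ennreal_mult''[of 2 "r powr (1 - 2 * a) / (1 - 2 * a)"] by (simp add: mult.commute)
  finally show ?thesis .
qed

lemma bracket_weight_far_le:
  assumes a: "0 \<le> a" and yx: "\<bar>y\<bar> \<le> \<bar>x\<bar>" and far: "\<bar>x\<bar> / 2 \<le> \<bar>x - y\<bar>"
  shows "bracket_weight a (x - y) \<le> 8 powr a * ((1 + \<bar>x\<bar>) powr (- a) * (1 + \<bar>y\<bar>) powr (- a))"
proof -
  have "\<bar>x\<bar>\<^sup>2 \<le> 4 * (x - y)\<^sup>2"
    using power_mono[OF far, of 2] by (simp add: power_divide)
  moreover have "2 * \<bar>x\<bar> \<le> 1 + \<bar>x\<bar>\<^sup>2"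
    using sum_squares_ge_zero[of "\<bar>x\<bar> - 1" 0] by (simp add: power2_eq_square algebra_simps)
  ultimately have "(1 + \<bar>x\<bar>)\<^sup>2 \<le> 8 * (1 + (x - y)\<^sup>2)"
    by (simp add: power2_eq_square algebra_simps)
  then have "1 / (1 + (x - y)\<^sup>2) \<le> 8 * (1 + \<bar>x\<bar>) powr (- 2)"
    by (simp add: powr_minus_divide divide_simps add_pos_nonneg)
  then have "bracket_weight a (x - y) \<le> (8 * (1 + \<bar>x\<bar>) powr (- 2)) powr a"
    unfolding bracket_weight_def using a by (intro powr_mono2) auto
  also have "\<dots> = 8 powr a * ((1 + \<bar>x\<bar>) powr (- a) * (1 + \<bar>x\<bar>) powr (- a))"
    by (simp add: powr_mult powr_powr powr_add[symmetric])
  also have "\<dots> \<le> 8 powr a * ((1 + \<bar>x\<bar>) powr (- a) * (1 + \<bar>y\<bar>) powr (- a))"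
    using a yx by (intro mult_left_mono powr_mono2') auto
  finally show ?thesis .
qed

lemma power_profile_mult_decay:
  "power_profile s b t * (1 + \<bar>t\<bar>) powr (- a) = power_profile s (a + b) t"
  by (simp add: power_profile_def powr_add[symmetric] mult.assoc add.commute)

lemma bracket_weight_power_profile_far:
  assumes a: "0 \<le> a" and far: "\<bar>x\<bar> / 2 \<le> \<bar>x - y\<bar>" "\<bar>y\<bar> / 2 \<le> \<bar>y - x\<bar>"
  shows "bracket_weight a (x - y) * power_profile s b x * power_profile s b y
    \<le> 8 powr a * (power_profile s (a + b) x * power_profile s (a + b) y)"
proof -
  have *: "bracket_weight a (x - y) * power_profile s b x * power_profile s b y
      \<le> 8 powr a * (power_profile s (a + b) x * power_profile s (a + b) y)"
    if "\<bar>y\<bar> \<le> \<bar>x\<bar>" "\<bar>x\<bar> / 2 \<le> \<bar>x - y\<bar>" for x y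
  proof -
    have "bracket_weight a (x - y) * power_profile s b x * power_profile s b y
        \<le> 8 powr a * ((1 + \<bar>x\<bar>) powr (- a) * (1 + \<bar>y\<bar>) powr (- a))
          * power_profile s b x * power_profile s b y"
      using bracket_weight_far_le[OF a that] by (intro mult_right_mono) (auto simp: power_profile_nonneg)
    then show ?thesis
      by (simp add: power_profile_mult_decay[symmetric] mult_ac)
  qed
  show ?thesis
  proof (cases "\<bar>y\<bar> \<le> \<bar>x\<bar>")
    case True
    then show ?thesis using * far by blast
  next
    case False
    then show ?thesis using *[of x y] far
      by (simp add: bracket_weight_minus_commute mult_ac)
  qed
qed

definition near_diagonal :: "real \<Rightarrow> real \<Rightarrow> real \<Rightarrow> real \<Rightarrow> real \<Rightarrow> real" where
  "near_diagonal a s b x y =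
    (if \<bar>x - y\<bar> < \<bar>x\<bar> / 2 then bracket_weight a (x - y) * (power_profile s b x)\<^sup>2 else 0)"

lemma near_diagonal_nonneg: "0 \<le> near_diagonal a s b x y"
  by (simp add: near_diagonal_def bracket_weight_nonneg)

lemma measurable_near_diagonal [measurable (raw)]:
  assumes [measurable]: "f \<in> borel_measurable M" "g \<in> borel_measurable M"
  shows "(\<lambda>x. near_diagonal a s b (f x) (g x)) \<in> borel_measurable M"
  unfolding near_diagonal_def by measurable

lemma bracket_weight_power_profile_split:
  assumes a: "0 \<le> a"
  shows "bracket_weight a (x - y) * power_profile s b x * power_profile s b y
    \<le> 8 powr a * (power_profile s (a + b) x * power_profile s (a + b) y)
      + 2 powr (\<bar>s\<bar> + \<bar>b\<bar>) * near_diagonal a s b x y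
      + 2 powr (\<bar>s\<bar> + \<bar>b\<bar>) * near_diagonal a s b y x"
proof -
  define C where "C = 2 powr (\<bar>s\<bar> + \<bar>b\<bar>)"
  have nonneg: "0 \<le> 8 powr a * (power_profile s (a + b) x * power_profile s (a + b) y)"
    "0 \<le> C * near_diagonal a s b x y" "0 \<le> C * near_diagonal a s b y x"
    by (simp_all add: C_def power_profile_nonneg near_diagonal_nonneg)
  consider (near_x) "\<bar>x - y\<bar> < \<bar>x\<bar> / 2" | (near_y) "\<bar>y - x\<bar> < \<bar>y\<bar> / 2"
    | (far) "\<bar>x\<bar> / 2 \<le> \<bar>x - y\<bar>" "\<bar>y\<bar> / 2 \<le> \<bar>y - x\<bar>"
    by linarith
  then show ?thesis
  proof cases
    case near_x
    have "bracket_weight a (x - y) * power_profile s b x * power_profile s b y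
        \<le> bracket_weight a (x - y) * power_profile s b x * (C * power_profile s b x)"
      unfolding C_def using power_profile_le_near[OF near_x]
      by (intro mult_left_mono) (simp_all add: bracket_weight_nonneg power_profile_nonneg)
    also have "\<dots> = C * near_diagonal a s b x y"
      using near_x by (simp add: near_diagonal_def power2_eq_square mult_ac)
    finally show ?thesis using nonneg unfolding C_def by linarith
  next
    case near_y
    have "bracket_weight a (x - y) * power_profile s b x * power_profile s b y
        \<le> bracket_weight a (y - x) * (C * power_profile s b y) * power_profile s b y"
      unfolding C_def bracket_weight_minus_commute[of a x y] using power_profile_le_near[OF near_y]
      by (intro mult_left_mono mult_right_mono) (simp_all add: bracket_weight_nonneg power_profile_nonneg)
    also have "\<dots> = C * near_diagonal a s b y x"
      using near_y by (simp add: near_diagonal_def power2_eq_square mult_ac)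
    finally show ?thesis using nonneg unfolding C_def by linarith
  next
    case far
    then show ?thesis
      using bracket_weight_power_profile_far[OF a far, of s b] nonneg unfolding C_def by linarith
  qed
qed

lemma power_profile_sq_mult:
  "(power_profile s b x)\<^sup>2 * \<bar>x\<bar> powr c = power_profile (2 * s + c) (2 * b) x"
  by (cases "x = 0")
    (simp_all add: power_profile_def power2_eq_square powr_add[symmetric] algebra_simps)

lemma nn_integral_near_diagonal_le:
  assumes a: "0 \<le> a" "a < 1/2"
  shows "(\<integral>\<^sup>+y. ennreal (near_diagonal a s b x y) \<partial>lborel)
    \<le> ennreal (2 / (1 - 2 * a) * power_profile (2 * s + 1 - 2 * a) (2 * b) x)"
proof -
  have "(\<integral>\<^sup>+y. ennreal (near_diagonal a s b x y) \<partial>lborel)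
      = (\<integral>\<^sup>+z. ennreal (near_diagonal a s b x (x - z)) \<partial>lborel)"
    using nn_integral_real_affine[of "\<lambda>y. ennreal (near_diagonal a s b x y)" "-1" x] by simp
  also have "\<dots> = ennreal ((power_profile s b x)\<^sup>2)
      * (\<integral>\<^sup>+z. ennreal (if \<bar>z\<bar> < \<bar>x\<bar> / 2 then bracket_weight a z else 0) \<partial>lborel)"
    by (subst nn_integral_cmult[symmetric])
      (auto simp: near_diagonal_def ennreal_mult' bracket_weight_nonneg mult.commute intro!: nn_integral_cong)
  also have "\<dots> \<le> ennreal ((power_profile s b x)\<^sup>2)
      * ennreal (2 / (1 - 2 * a) * (\<bar>x\<bar> / 2) powr (1 - 2 * a))"
    using a by (intro mult_left_mono nn_integral_bracket_weight_ball) auto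
  also have "\<dots> \<le> ennreal ((power_profile s b x)\<^sup>2) * ennreal (2 / (1 - 2 * a) * \<bar>x\<bar> powr (1 - 2 * a))"
    using a by (intro mult_left_mono ennreal_leI powr_mono2) auto
  also have "\<dots> = ennreal (2 / (1 - 2 * a) * power_profile (2 * s + 1 - 2 * a) (2 * b) x)"
    using a power_profile_sq_mult[of s b x "1 - 2 * a"]
    by (simp add: ennreal_mult''[symmetric] mult_ac add_diff_eq)
  finally show ?thesis .
qed

lemma nn_integral_near_diagonal_finite:
  assumes a: "0 \<le> a" "a < 1/2" and s: "-1/2 < s" and sb: "1 < a + b - s"
  shows "(\<integral>\<^sup>+x. \<integral>\<^sup>+y. ennreal (near_diagonal a s b x y) \<partial>lborel \<partial>lborel) < \<infinity>"
proof -
  have c: "0 \<le> 2 / (1 - 2 * a)"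
    using a by simp
  have "(\<integral>\<^sup>+x. \<integral>\<^sup>+y. ennreal (near_diagonal a s b x y) \<partial>lborel \<partial>lborel)
      \<le> (\<integral>\<^sup>+x. ennreal (2 / (1 - 2 * a)) * ennreal (power_profile (2 * s + 1 - 2 * a) (2 * b) x) \<partial>lborel)"
    using nn_integral_near_diagonal_le[OF a]
    by (intro nn_integral_mono) (simp only: ennreal_mult'[OF c, symmetric])
  also have "\<dots> = ennreal (2 / (1 - 2 * a))
      * (\<integral>\<^sup>+x. ennreal (power_profile (2 * s + 1 - 2 * a) (2 * b) x) \<partial>lborel)"
    by (rule nn_integral_cmult) measurable
  also have "\<dots> < \<infinity>"
    using nn_integral_power_profile_finite[of "2 * s + 1 - 2 * a" "2 * b"] a s sb
    by (simp add: ennreal_mult_less_top)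
  finally show ?thesis .
qed

lemma nn_integral_bracket_weight_power_profile_finite:
  assumes a: "0 \<le> a" "a < 1/2" and s: "-1/2 < s" and sb: "1 < a + b - s"
  shows "(\<integral>\<^sup>+x. \<integral>\<^sup>+y. ennreal (bracket_weight a (x - y) * power_profile s b x * power_profile s b y)
    \<partial>lborel \<partial>lborel) < \<infinity>"
proof -
  define C where "C = 2 powr (\<bar>s\<bar> + \<bar>b\<bar>)"
  define P where "P = (\<integral>\<^sup>+t. ennreal (power_profile s (a + b) t) \<partial>lborel)"
  define N where "N = (\<integral>\<^sup>+x. \<integral>\<^sup>+y. ennreal (near_diagonal a s b x y) \<partial>lborel \<partial>lborel)"
  have P: "P < \<infinity>"
    unfolding P_def using s sb by (intro nn_integral_power_profile_finite) auto
  have N: "N < \<infinity>"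
    unfolding N_def using a s sb by (rule nn_integral_near_diagonal_finite)
  have N_swap: "(\<integral>\<^sup>+x. \<integral>\<^sup>+y. ennreal (near_diagonal a s b y x) \<partial>lborel \<partial>lborel) = N"
    unfolding N_def by (rule lborel_pair.Fubini') measurable
  have "(\<integral>\<^sup>+x. \<integral>\<^sup>+y. ennreal (bracket_weight a (x - y) * power_profile s b x * power_profile s b y)
      \<partial>lborel \<partial>lborel)
    \<le> (\<integral>\<^sup>+x. \<integral>\<^sup>+y. ennreal (8 powr a) * ennreal (power_profile s (a + b) x) * ennreal (power_profile s (a + b) y)
      + ennreal C * ennreal (near_diagonal a s b x y) + ennreal C * ennreal (near_diagonal a s b y x)
      \<partial>lborel \<partial>lborel)"
    using bracket_weight_power_profile_split[OF a(1)]
    by (intro nn_integral_mono ennreal_leI)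
      (simp add: C_def ennreal_plus[symmetric] ennreal_mult[symmetric] power_profile_nonneg
        near_diagonal_nonneg mult.assoc del: ennreal_plus)
  also have "\<dots> = (\<integral>\<^sup>+x. ennreal (8 powr a) * ennreal (power_profile s (a + b) x) * P
      + ennreal C * (\<integral>\<^sup>+y. ennreal (near_diagonal a s b x y) \<partial>lborel)
      + ennreal C * (\<integral>\<^sup>+y. ennreal (near_diagonal a s b y x) \<partial>lborel) \<partial>lborel)"
    unfolding P_def by (intro nn_integral_cong) (simp add: nn_integral_add nn_integral_cmult)
  also have "\<dots> = ennreal (8 powr a) * P * P + ennreal C * N + ennreal C * N"
    using N_swap unfolding P_def N_def by (simp add: nn_integral_add nn_integral_cmult nn_integral_multc)
  also have "\<dots> < \<infinity>"
    using P N by (simp add: ennreal_mult_less_top)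
  finally show ?thesis .
qed

lemma nn_integral_lborel_vec_prod:
  fixes g :: "'n::finite \<Rightarrow> real \<Rightarrow> ennreal"
  assumes [measurable]: "\<And>i. g i \<in> borel_measurable borel"
  shows "(\<integral>\<^sup>+x. (\<Prod>i\<in>UNIV. g i (x $ i)) \<partial>(lborel :: (real^'n) measure))
    = (\<Prod>i\<in>UNIV. \<integral>\<^sup>+t. g i t \<partial>lborel)"
proof -
  let ?B = "Basis :: (real^'n) set"
  \<comment> \<open>lborel on real^'n is the image of a product measure indexed by Basis, so g is reindexed by
    basis vectors\<close>
  define G where "G b = g (THE i. b = axis i (1::real))" for b :: "real^'n"
  have Basis: "?B = range (\<lambda>i. axis i 1)"
    by (auto simp: Basis_vec_def)
  have G_axis: "G (axis i 1) = g i" for i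
    unfolding G_def by (rule arg_cong[where f=g]) (auto simp: axis_eq_axis)
  have inj: "inj (\<lambda>i::'n. axis i (1::real))"
    by (auto simp: inj_def axis_eq_axis)
  have coord: "(\<Sum>b\<in>?B. f b *\<^sub>R b) $ i = f (axis i 1)" for f i
  proof -
    have "(\<Sum>b\<in>?B. f b *\<^sub>R b) $ i = (\<Sum>j\<in>UNIV. if j = i then f (axis j 1) else 0)"
      unfolding Basis sum.reindex[OF inj] sum_component by (intro sum.cong) (auto simp: axis_def)
    then show ?thesis by simp
  qed
  have "(\<integral>\<^sup>+x. (\<Prod>i\<in>UNIV. g i (x $ i)) \<partial>(lborel :: (real^'n) measure))
      = (\<integral>\<^sup>+f. (\<Prod>i\<in>UNIV. g i (f (axis i 1))) \<partial>(\<Pi>\<^sub>M b\<in>?B. lborel))"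
    by (subst lborel_eq, subst nn_integral_distr) (measurable, simp only: coord)
  also have "\<dots> = (\<integral>\<^sup>+f. (\<Prod>b\<in>?B. G b (f b)) \<partial>(\<Pi>\<^sub>M b\<in>?B. lborel))"
    unfolding Basis by (subst prod.reindex[OF inj]) (simp add: G_axis)
  also have "\<dots> = (\<Prod>b\<in>?B. \<integral>\<^sup>+t. G b t \<partial>lborel)"
    by (rule product_sigma_finite.product_nn_integral_prod)
      (auto simp: product_sigma_finite_def G_def intro: lborel.sigma_finite_measure_axioms)
  also have "\<dots> = (\<Prod>i\<in>UNIV. \<integral>\<^sup>+t. g i t \<partial>lborel)"
    unfolding Basis by (subst prod.reindex[OF inj]) (simp add: G_axis)
  finally show ?thesis .
qed

lemma lborel_measurable_vec_nth [measurable]: "(\<lambda>x::real^'n. x $ i) \<in> borel_measurable lborel"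
  by simp

lemma nn_integral_pair_vec_prod:
  fixes F :: "'n::finite \<Rightarrow> real \<Rightarrow> real \<Rightarrow> ennreal"
  assumes [measurable]: "\<And>i. case_prod (F i) \<in> borel_measurable (borel \<Otimes>\<^sub>M borel)"
  shows "(\<integral>\<^sup>+p. (\<Prod>i\<in>UNIV. F i (fst p $ i) (snd p $ i)) \<partial>((lborel :: (real^'n) measure) \<Otimes>\<^sub>M lborel))
    = (\<Prod>i\<in>UNIV. \<integral>\<^sup>+x. \<integral>\<^sup>+y. F i x y \<partial>lborel \<partial>lborel)"
proof -
  have [measurable]: "case_prod (F i) \<in> borel_measurable (lborel \<Otimes>\<^sub>M lborel)" for i
    by (simp cong: measurable_cong_sets)
  have "(\<integral>\<^sup>+p. (\<Prod>i\<in>UNIV. F i (fst p $ i) (snd p $ i)) \<partial>((lborel :: (real^'n) measure) \<Otimes>\<^sub>M lborel))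
      = (\<integral>\<^sup>+x. \<integral>\<^sup>+y. (\<Prod>i\<in>UNIV. F i (x $ i) (y $ i)) \<partial>lborel \<partial>(lborel :: (real^'n) measure))"
    by (subst lborel.nn_integral_fst[symmetric]) (auto, measurable)
  also have "\<dots> = (\<integral>\<^sup>+x. (\<Prod>i\<in>UNIV. \<integral>\<^sup>+y. F i (x $ i) y \<partial>lborel) \<partial>(lborel :: (real^'n) measure))"
    by (intro nn_integral_cong nn_integral_lborel_vec_prod) measurable
  also have "\<dots> = (\<Prod>i\<in>UNIV. \<integral>\<^sup>+x. \<integral>\<^sup>+y. F i x y \<partial>lborel \<partial>lborel)"
    by (rule nn_integral_lborel_vec_prod) measurable
  finally show ?thesis .
qed

lemma nn_integral_pair_finite_if_le_prod:
  fixes F :: "'n::finite \<Rightarrow> real \<Rightarrow> real \<Rightarrow> real" and G :: "(real^'n) \<times> (real^'n) \<Rightarrow> real"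
  assumes le: "\<And>p. G p \<le> c * (\<Prod>i\<in>UNIV. F i (fst p $ i) (snd p $ i))" and "0 \<le> c"
    and F: "\<And>i x y. 0 \<le> F i x y" "\<And>i. case_prod (F i) \<in> borel_measurable (borel \<Otimes>\<^sub>M borel)"
    and finite: "\<And>i. (\<integral>\<^sup>+x. \<integral>\<^sup>+y. ennreal (F i x y) \<partial>lborel \<partial>lborel) < \<infinity>"
  shows "(\<integral>\<^sup>+p. ennreal (G p) \<partial>(lborel \<Otimes>\<^sub>M lborel)) < \<infinity>"
proof -
  have [measurable]: "(\<lambda>(x, y). ennreal (F i x y)) \<in> borel_measurable (borel \<Otimes>\<^sub>M borel)" for i
    using F(2) by measurable
  have "(\<integral>\<^sup>+p. ennreal (G p) \<partial>(lborel \<Otimes>\<^sub>M lborel))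
      \<le> (\<integral>\<^sup>+p. ennreal c * (\<Prod>i\<in>UNIV. ennreal (F i (fst p $ i) (snd p $ i))) \<partial>(lborel \<Otimes>\<^sub>M lborel))"
    using le \<open>0 \<le> c\<close>
    by (intro nn_integral_mono) (simp add: ennreal_leI ennreal_mult[symmetric] prod_ennreal F(1) prod_nonneg)
  also have "\<dots> = ennreal c * (\<Prod>i\<in>UNIV. \<integral>\<^sup>+x. \<integral>\<^sup>+y. ennreal (F i x y) \<partial>lborel \<partial>lborel)"
    using nn_integral_pair_vec_prod[of "\<lambda>i x y. ennreal (F i x y)"] by (subst nn_integral_cmult) simp_all
  also have "\<dots> < \<infinity>"
    using finite by (simp add: ennreal_mult_eq_top_iff ennreal_prod_eq_top less_top[symmetric])
  finally show ?thesis .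
qed

lemma bracket_weight_norm_le_prod:
  fixes z :: "real^'n" and a :: real
  assumes a: "0 \<le> a"
  shows "(1 / (1 + (norm z)\<^sup>2)) powr (a * CARD('n)) \<le> (\<Prod>i\<in>UNIV. bracket_weight a (z $ i))"
proof -
  have pos: "0 < 1 / (1 + (norm z)\<^sup>2)"
    by (simp add: add_pos_nonneg)
  have "(1 / (1 + (norm z)\<^sup>2)) powr (a * CARD('n)) = (\<Prod>i\<in>(UNIV :: 'n set). (1 / (1 + (norm z)\<^sup>2)) powr a)"
    using pos by (simp add: powr_power mult.commute)
  also have "\<dots> \<le> (\<Prod>i\<in>UNIV. bracket_weight a (z $ i))"
  proof (rule prod_mono)
    fix i
    have "(z $ i)\<^sup>2 \<le> (norm z)\<^sup>2"
      using component_le_norm_cart[of z i] by (metis abs_ge_zero power2_abs power_mono)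
    then have "1 / (1 + (norm z)\<^sup>2) \<le> 1 / (1 + (z $ i)\<^sup>2)"
      by (intro divide_left_mono) (auto simp: add_pos_nonneg)
    then show "0 \<le> (1 / (1 + (norm z)\<^sup>2)) powr a \<and> (1 / (1 + (norm z)\<^sup>2)) powr a \<le> bracket_weight a (z $ i)"
      unfolding bracket_weight_def using a pos by (auto intro!: powr_mono2)
  qed
  finally show ?thesis .
qed

lemma one_plus_powr_le:
  fixes t e :: real
  assumes "0 \<le> t" "0 < e"
  shows "(1 + t) powr e \<le> 2 powr e * (1 + t powr e)"
proof (cases "t \<le> 1")
  case True
  have "(1 + t) powr e \<le> 2 powr e"
    using assms True by (intro powr_mono2) auto
  then show ?thesis
    by (simp add: mult_le_cancel_left1 order_trans)
next
  case False
  have "(1 + t) powr e \<le> (2 * t) powr e"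
    using assms False by (intro powr_mono2) auto
  also have "\<dots> \<le> 2 powr e * (1 + t powr e)"
    using False by (simp add: powr_mult)
  finally show ?thesis .
qed

lemma K_kernel_le_prod_power_profile:
  fixes H0 \<kappa> \<epsilon> :: real and H \<eta> :: "real^'n" and b :: "'n \<Rightarrow> real"
  defines "e \<equiv> 1 + 2 * H0 - 2 * \<kappa> - 2 * \<epsilon>"
  assumes e: "0 < e" and b: "\<And>i. 0 \<le> b i" "sum b UNIV = e"
  shows "K_kernel H0 H \<kappa> \<epsilon> \<eta> \<le> 2 powr e * (\<Prod>i\<in>UNIV. power_profile (1 - 2 * H $ i) (b i) (\<eta> $ i))"
proof -
  define P where "P = (\<Prod>i\<in>UNIV. (1 + \<bar>\<eta> $ i\<bar>) powr b i)"
  have P_pos: "0 < P"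
    unfolding P_def by (intro prod_pos) (auto simp: add_pos_nonneg)
  have "P \<le> (\<Prod>i\<in>UNIV. (1 + norm \<eta>) powr b i)"
    unfolding P_def by (intro prod_mono conjI powr_mono2) (auto simp: b component_le_norm_cart)
  also have "\<dots> = (1 + norm \<eta>) powr e"
    using powr_sum[of "1 + norm \<eta>" b UNIV] b(2) by (smt (verit) norm_ge_zero)
  also have "\<dots> \<le> 2 powr e * (1 + norm \<eta> powr e)"
    using e by (intro one_plus_powr_le) auto
  finally have "1 / (1 + norm \<eta> powr e) \<le> 2 powr e * (1 / P)"
    using P_pos by (simp add: divide_simps add_pos_nonneg mult.commute)
  also have "1 / P = (\<Prod>i\<in>UNIV. (1 + \<bar>\<eta> $ i\<bar>) powr (- b i))"
    unfolding P_def by (simp add: powr_minus_divide prod_dividef)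
  finally have decay: "1 / (1 + norm \<eta> powr e) \<le> 2 powr e * (\<Prod>i\<in>UNIV. (1 + \<bar>\<eta> $ i\<bar>) powr (- b i))" .
  have "K_kernel H0 H \<kappa> \<epsilon> \<eta> = 1 / (1 + norm \<eta> powr e) * (\<Prod>i\<in>UNIV. \<bar>\<eta> $ i\<bar> powr (1 - 2 * H $ i))"
    unfolding K_kernel_def e_def by (simp add: powr_minus_divide[symmetric])
  also have "\<dots> \<le> 2 powr e * (\<Prod>i\<in>UNIV. (1 + \<bar>\<eta> $ i\<bar>) powr (- b i)) * (\<Prod>i\<in>UNIV. \<bar>\<eta> $ i\<bar> powr (1 - 2 * H $ i))"
    using decay by (rule mult_right_mono) (simp add: prod_nonneg)
  also have "\<dots> = 2 powr e * (\<Prod>i\<in>UNIV. power_profile (1 - 2 * H $ i) (b i) (\<eta> $ i))"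
    by (simp add: power_profile_def prod.distrib mult_ac)
  finally show ?thesis .
qed

lemma weighted_K_kernel_pair_le_prod:
  fixes H0 \<kappa> \<epsilon> a \<alpha> :: real and H x y :: "real^'n" and b :: "'n \<Rightarrow> real"
  defines "e \<equiv> 1 + 2 * H0 - 2 * \<kappa> - 2 * \<epsilon>"
  assumes a: "0 \<le> a" "a * CARD('n) = 2 * \<alpha>" and e: "0 < e"
    and b: "\<And>i. 0 \<le> b i" "sum b UNIV = e"
  shows "1 / (1 + (norm (x - y))\<^sup>2) powr (2 * \<alpha>) * K_kernel H0 H \<kappa> \<epsilon> x * K_kernel H0 H \<kappa> \<epsilon> y
    \<le> (2 powr e)\<^sup>2 * (\<Prod>i\<in>UNIV. bracket_weight a (x $ i - y $ i)
      * power_profile (1 - 2 * H $ i) (b i) (x $ i) * power_profile (1 - 2 * H $ i) (b i) (y $ i))"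
proof -
  have "1 / (1 + (norm (x - y))\<^sup>2) powr (2 * \<alpha>) \<le> (\<Prod>i\<in>UNIV. bracket_weight a (x $ i - y $ i))"
    using bracket_weight_norm_le_prod[OF a(1), of "x - y"] a(2) by (simp add: powr_divide)
  moreover have "K_kernel H0 H \<kappa> \<epsilon> z
      \<le> 2 powr e * (\<Prod>i\<in>UNIV. power_profile (1 - 2 * H $ i) (b i) (z $ i))" for z
    using e b unfolding e_def by (rule K_kernel_le_prod_power_profile)
  ultimately have "1 / (1 + (norm (x - y))\<^sup>2) powr (2 * \<alpha>)
      * K_kernel H0 H \<kappa> \<epsilon> x * K_kernel H0 H \<kappa> \<epsilon> y
    \<le> (\<Prod>i\<in>UNIV. bracket_weight a (x $ i - y $ i))
      * (2 powr e * (\<Prod>i\<in>UNIV. power_profile (1 - 2 * H $ i) (b i) (x $ i)))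
      * (2 powr e * (\<Prod>i\<in>UNIV. power_profile (1 - 2 * H $ i) (b i) (y $ i)))"
    by (intro mult_mono) (auto simp: K_kernel_def bracket_weight_nonneg power_profile_nonneg prod_nonneg)
  also have "\<dots> = (2 powr e)\<^sup>2 * (\<Prod>i\<in>UNIV. bracket_weight a (x $ i - y $ i)
      * power_profile (1 - 2 * H $ i) (b i) (x $ i) * power_profile (1 - 2 * H $ i) (b i) (y $ i))"
    by (simp add: prod.distrib power2_eq_square mult_ac)
  finally show ?thesis .
qed

lemma nn_integral_weighted_K_kernel_pair_finite:
  fixes H0 \<kappa> \<epsilon> \<alpha> :: real and H :: "real^'n"
  defines "e \<equiv> 1 + 2 * H0 - 2 * \<kappa> - 2 * \<epsilon>"
  assumes \<alpha>: "0 \<le> \<alpha>" "\<alpha> < CARD('n) / 4" and H: "\<And>i. H $ i < 3/4" and e: "0 < e"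
    and e_large: "2 * CARD('n) - 2 * (\<Sum>i\<in>UNIV. H $ i) - 2 * \<alpha> < e"
  shows "(\<integral>\<^sup>+ p. ennreal ((1 / (1 + (norm (fst p - snd p))\<^sup>2) powr (2 * \<alpha>))
      * K_kernel H0 H \<kappa> \<epsilon> (fst p) * K_kernel H0 H \<kappa> \<epsilon> (snd p)) \<partial>(lborel \<Otimes>\<^sub>M lborel)) < \<infinity>"
proof -
  define d where "d = real CARD('n)"
  define a where "a = 2 * \<alpha> / d"
  define \<theta> where "\<theta> = (e - (2 * d - 2 * (\<Sum>i\<in>UNIV. H $ i) - 2 * \<alpha>)) / d"
  \<comment> \<open>theta is the slack in e_large spread over the coordinates, so that
    a + b i - (1 - 2 * H $ i) = 1 + theta\<close>
  define b where "b i = 2 - 2 * H $ i - a + \<theta>" for i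
  define F where "F i x y = bracket_weight a (x - y)
    * power_profile (1 - 2 * H $ i) (b i) x * power_profile (1 - 2 * H $ i) (b i) y" for i x y
  have d: "0 < d"
    by (simp add: d_def)
  have a: "0 \<le> a" "a < 1/2" "a * d = 2 * \<alpha>"
    using \<alpha> d by (auto simp: a_def d_def field_simps)
  have \<theta>: "0 < \<theta>"
    using e_large d by (simp add: \<theta>_def d_def)
  have b: "0 \<le> b i" for i
    using H[of i] a \<theta> by (simp add: b_def)
  have "sum b UNIV = (\<Sum>i\<in>UNIV. (2 - a + \<theta>) - 2 * H $ i)"
    unfolding b_def by (intro sum.cong) auto
  also have "\<dots> = d * (2 - a + \<theta>) - 2 * (\<Sum>i\<in>UNIV. H $ i)"
    unfolding d_def by (simp add: sum_subtractf sum_distrib_left)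
  also have "\<dots> = 2 * d - a * d + \<theta> * d - 2 * (\<Sum>i\<in>UNIV. H $ i)"
    by (simp add: algebra_simps)
  also have "\<theta> * d = e - (2 * d - 2 * (\<Sum>i\<in>UNIV. H $ i) - 2 * \<alpha>)"
    using d by (simp add: \<theta>_def)
  finally have sum_b: "sum b UNIV = e"
    using a(3) by linarith
  have F_finite: "(\<integral>\<^sup>+x. \<integral>\<^sup>+y. ennreal (F i x y) \<partial>lborel \<partial>lborel) < \<infinity>" for i
    unfolding F_def using a H[of i] \<theta>
    by (intro nn_integral_bracket_weight_power_profile_finite) (auto simp: b_def)
  have F_nonneg: "0 \<le> F i x y" for i x y
    by (simp add: F_def bracket_weight_nonneg power_profile_nonneg)
  have F_measurable: "case_prod (F i) \<in> borel_measurable (borel \<Otimes>\<^sub>M borel)" for i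
    unfolding F_def by measurable
  have "1 / (1 + (norm (fst p - snd p))\<^sup>2) powr (2 * \<alpha>)
      * K_kernel H0 H \<kappa> \<epsilon> (fst p) * K_kernel H0 H \<kappa> \<epsilon> (snd p)
    \<le> (2 powr e)\<^sup>2 * (\<Prod>i\<in>UNIV. F i (fst p $ i) (snd p $ i))" for p
    using a e b sum_b unfolding F_def e_def d_def by (intro weighted_K_kernel_pair_le_prod)
  then show ?thesis
    by (rule nn_integral_pair_finite_if_le_prod[OF _ _ F_nonneg F_measurable F_finite]) simp
qed

theorem lemma3p4:
  fixes H0 :: real and H :: "real^'n" and \<alpha> :: real
  defines "d \<equiv> real CARD('n)"
  defines "Hp \<equiv> (\<Sum>i\<in>UNIV. H $ i)"
  assumes H0: "0 < H0" "H0 < 1"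
    and Hi: "\<forall>i. 0 < H $ i \<and> H $ i < 3/4"
    and lower: "3*d/4 - 1/2 < H0 + Hp" and upper: "H0 + Hp \<le> d - 1/2"
    and alpha: "max (d - 1/2 - (H0 + Hp)) ((d - 1)/4) < \<alpha>" "\<alpha> < d/4"
  shows "\<exists>\<kappa>>0. \<exists>\<epsilon>>0.
    (\<integral>\<^sup>+ p. ennreal ((1 / (1 + (norm (fst p - snd p))\<^sup>2) powr (2*\<alpha>))
        * K_kernel H0 H \<kappa> \<epsilon> (fst p) * K_kernel H0 H \<kappa> \<epsilon> (snd p))
      \<partial>(lborel \<Otimes>\<^sub>M lborel)) < \<infinity>"
proof -
  define X where "X = \<alpha> - (d - 1/2 - (H0 + Hp))"
  define \<delta> where "\<delta> = min (X / 4) ((1 + 2 * H0) / 8)"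
  have "0 < X"
    using alpha(1) by (simp add: X_def)
  then have \<delta>: "0 < \<delta>" "4 * \<delta> \<le> X" "8 * \<delta> \<le> 1 + 2 * H0"
    using H0 by (auto simp: \<delta>_def min_def)
  have "1 \<le> d"
    by (simp add: d_def Suc_le_eq)
  then have "0 \<le> \<alpha>"
    using alpha(1) by simp
  then have "(\<integral>\<^sup>+ p. ennreal ((1 / (1 + (norm (fst p - snd p))\<^sup>2) powr (2*\<alpha>))
      * K_kernel H0 H \<delta> \<delta> (fst p) * K_kernel H0 H \<delta> \<delta> (snd p)) \<partial>(lborel \<Otimes>\<^sub>M lborel)) < \<infinity>"
    using alpha(2) Hi H0 \<delta> \<open>0 < X\<close>
    by (intro nn_integral_weighted_K_kernel_pair_finite) (auto simp: d_def Hp_def X_def)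
  with \<delta>(1) show ?thesis
    by blast
qed

end
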